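(* Consider the repeated service game described in the context, with $t>0$, $\tau\in(0,t)$, $c>0$, $p>c$, $d\in(0,1)$, $w\in(0,1)$, and a strictly decreasing continuous utility $\Gamma:[0,1]\to(0,\infty)$ with $\Gamma(0)>p$. If the cooperation conditions hold, then $$d<\min\left\{1-\frac{c}{p},\ \Gamma^{-1}(p)\right\}\qquad\text{and}\qquad w>\max\left\{\frac{1-\tau/t}{p/c-\tau/t},\ 1-\frac{1-p/\Gamma(0)}{\tau/t}\right\}.$$
   Context: A service provider (SP) and a client interact in rounds of duration $t>0$. The parameters are: trial time $\tau$, SP cost per unit time $c$, price per unit time $p$, channel outage probability $d$, continuation probability (cooperation willingness) $w$, and a client utility function $\Gamma$. When both players use COOP, the long-term payoffs are $$\Pi_s^{\mathrm C}=\frac{(1-d)(p-c)t-dc\tau}{1-(1-d)w},\qquad \Pi_c^{\mathrm C}=\frac{(1-d)(\Gamma(d)-p)t+d\Gamma(d)\tau}{1-(1-d)w}.$$ For an integer $j\ge 2$, the long-term payoff of a player using the defect-and-recover-after-$j$-rounds strategy JDEF$_j$ against COOP is: - for the SP, $$\Pi_s^{(j)}=\frac{(1-d)\big(pt-c\tau-w^{j-1}c(t-\tau)\big)-dc\tau}{1-(1-d)w^{j}};$$ - for the client, $$\Pi_c^{(j)}=\frac{(1-d)\big(\Gamma(d)\tau+w^{j-1}(\Gamma(d)(t-\tau)-pt)\big)+d\Gamma(d)\tau}{1-(1-d)w^{j}}.$$ The cooperation conditions hold when both of the following hold: - $\Pi_s^{\mathrm C}\ge\Pi_s^{(j)}$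 for all integers $j\ge2$; - $\Pi_c^{\mathrm C}\ge \Pi_c^{(j)}$ for all integers $j\ge 2$. For $0<y\le\Gamma(0)$, we write $\Gamma^{-1}(y):=\sup\{x\in[0,1]:\Gamma(x)\ge y\}$. This coincides with the inverse of $\Gamma$ whenever $y$ is in the range of $\Gamma$. *)

theory Defs
  imports Complex_Main
begin

definition Pi_s_C :: "real \<Rightarrow> real \<Rightarrow> real \<Rightarrow> real \<Rightarrow> real \<Rightarrow> real \<Rightarrow> real" where
  "Pi_s_C t \<tau> c p d w = ((1 - d) * (p - c) * t - d * c * \<tau>) / (1 - (1 - d) * w)"

definition Pi_c_C :: "real \<Rightarrow> real \<Rightarrow> real \<Rightarrow> real \<Rightarrow> real \<Rightarrow> (real \<Rightarrow> real) \<Rightarrow> real" where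
  "Pi_c_C t \<tau> p d w \<Gamma> = ((1 - d) * (\<Gamma> d - p) * t + d * \<Gamma> d * \<tau>) / (1 - (1 - d) * w)"

definition Pi_s_J :: "nat \<Rightarrow> real \<Rightarrow> real \<Rightarrow> real \<Rightarrow> real \<Rightarrow> real \<Rightarrow> real \<Rightarrow> real" where
  "Pi_s_J j t \<tau> c p d w =
     ((1 - d) * (p * t - c * \<tau> - w ^ (j - 1) * c * (t - \<tau>)) - d * c * \<tau>) / (1 - (1 - d) * w ^ j)"

definition Pi_c_J :: "nat \<Rightarrow> real \<Rightarrow> real \<Rightarrow> real \<Rightarrow> real \<Rightarrow> real \<Rightarrow> (real \<Rightarrow> real) \<Rightarrow> real" where
  "Pi_c_J j t \<tau> p d w \<Gamma> =
     ((1 - d) * (\<Gamma> d * \<tau> + w ^ (j - 1) * (\<Gamma> d * (t - \<tau>) - p * t)) + d * \<Gamma> d * \<tau>) / (1 - (1 - d) * w ^ j)"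

definition cooperation_conditions ::
  "real \<Rightarrow> real \<Rightarrow> real \<Rightarrow> real \<Rightarrow> real \<Rightarrow> real \<Rightarrow> (real \<Rightarrow> real) \<Rightarrow> bool" where
  "cooperation_conditions t \<tau> c p d w \<Gamma> \<longleftrightarrow>
     (\<forall>j::nat. j \<ge> 2 \<longrightarrow> Pi_s_C t \<tau> c p d w \<ge> Pi_s_J j t \<tau> c p d w) \<and>
     (\<forall>j::nat. j \<ge> 2 \<longrightarrow> Pi_c_C t \<tau> p d w \<Gamma> \<ge> Pi_c_J j t \<tau> p d w \<Gamma>)"

definition gen_inv :: "(real \<Rightarrow> real) \<Rightarrow> real \<Rightarrow> real" where
  "gen_inv \<Gamma> y = Sup {x \<in> {0..1}. \<Gamma> x \<ge> y}"

end

theory Submission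
  imports Defs "HOL-Analysis.Elementary_Metric_Spaces"
begin

text \<open>For each player, COOP minus \<open>JDEF\<^sub>2\<close> factors
  as a positive quantity times an expression linear in \<open>w\<close>, so the two cooperation conditions
  at \<open>j = 2\<close> become \<open>c (t - \<tau>) \<le> w ((1 - d) p t - c \<tau>)\<close> and \<open>p t \<le> \<Gamma>(d) (t - \<tau> + w \<tau>)\<close>.
  Since \<open>w < 1\<close>, the first forces \<open>(1 - d) p > c\<close> and the second \<open>\<Gamma>(d) > p\<close>, which by
  continuity puts \<open>d\<close> strictly below \<open>\<Gamma>\<^sup>-\<^sup>1(p)\<close>. Solving each condition for \<open>w\<close> and using
  \<open>d > 0\<close> and \<open>\<Gamma>(d) < \<Gamma>(0)\<close> gives the strict lower bounds on \<open>w\<close>.\<close>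

lemma Pi_s_C_minus_Pi_s_J_2:
  assumes "(1 - d) * w \<noteq> 1" and "(1 - d) * w\<^sup>2 \<noteq> 1"
  shows "Pi_s_C t \<tau> c p d w - Pi_s_J 2 t \<tau> c p d w =
    (1 - w) * (1 - d) * (w * ((1 - d) * p * t - c * \<tau>) - c * (t - \<tau>))
      / ((1 - (1 - d) * w) * (1 - (1 - d) * w\<^sup>2))"
  using assms unfolding Pi_s_C_def Pi_s_J_def
  by (simp add: field_simps power2_eq_square)

lemma Pi_c_C_minus_Pi_c_J_2:
  assumes "(1 - d) * w \<noteq> 1" and "(1 - d) * w\<^sup>2 \<noteq> 1"
  shows "Pi_c_C t \<tau> p d w \<Gamma> - Pi_c_J 2 t \<tau> p d w \<Gamma> =
    (1 - w) * (1 - d) * (\<Gamma> d * (t - \<tau> + w * \<tau>) - p * t)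
      / ((1 - (1 - d) * w) * (1 - (1 - d) * w\<^sup>2))"
  using assms unfolding Pi_c_C_def Pi_c_J_def
  by (simp add: field_simps power2_eq_square)

lemma discount_factors_pos:
  fixes d w :: real
  assumes "0 \<le> d" "d < 1" "0 \<le> w" "w < 1"
  shows "0 < (1 - w) * (1 - d)" and "0 < (1 - (1 - d) * w) * (1 - (1 - d) * w\<^sup>2)"
proof -
  have "(1 - d) * w \<le> w" "(1 - d) * w\<^sup>2 \<le> w\<^sup>2"
    using assms by (simp_all add: mult_left_le_one_le)
  moreover have "w\<^sup>2 < 1"
    using assms by (simp add: power_less_one_iff)
  ultimately show "0 < (1 - (1 - d) * w) * (1 - (1 - d) * w\<^sup>2)"
    using assms by simp
qed (use assms in simp)

lemma le_iff_factored_difference: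
  fixes x y a b z :: real
  assumes "x - y = a * z / b" and "0 < a" and "0 < b"
  shows "y \<le> x \<longleftrightarrow> 0 \<le> z"
proof -
  have "y \<le> x \<longleftrightarrow> 0 \<le> a * z / b" using assms(1) by linarith
  also have "\<dots> \<longleftrightarrow> 0 \<le> z" using assms(2,3) by (simp add: zero_le_divide_iff zero_le_mult_iff)
  finally show ?thesis .
qed

lemma Pi_s_J_2_le_Pi_s_C_iff:
  assumes "0 \<le> d" "d < 1" "0 \<le> w" "w < 1"
  shows "Pi_s_J 2 t \<tau> c p d w \<le> Pi_s_C t \<tau> c p d w \<longleftrightarrow>
    c * (t - \<tau>) \<le> w * ((1 - d) * p * t - c * \<tau>)"
proof -
  note pos = discount_factors_pos[OF assms]
  then have "(1 - d) * w \<noteq> 1" "(1 - d) * w\<^sup>2 \<noteq> 1" by auto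
  from le_iff_factored_difference[OF Pi_s_C_minus_Pi_s_J_2[OF this] pos]
  show ?thesis by simp
qed

lemma Pi_c_J_2_le_Pi_c_C_iff:
  assumes "0 \<le> d" "d < 1" "0 \<le> w" "w < 1"
  shows "Pi_c_J 2 t \<tau> p d w \<Gamma> \<le> Pi_c_C t \<tau> p d w \<Gamma> \<longleftrightarrow>
    p * t \<le> \<Gamma> d * (t - \<tau> + w * \<tau>)"
proof -
  note pos = discount_factors_pos[OF assms]
  then have "(1 - d) * w \<noteq> 1" "(1 - d) * w\<^sup>2 \<noteq> 1" by auto
  from le_iff_factored_difference[OF Pi_c_C_minus_Pi_c_J_2[OF this] pos]
  show ?thesis by simp
qed

lemma sp_condition_imp_margin:
  fixes c t \<tau> w d p :: real
  assumes sp: "c * (t - \<tau>) \<le> w * ((1 - d) * p * t - c * \<tau>)"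
    and "0 < c" "\<tau> < t" "0 \<le> w" "w < 1"
  shows "c * (t - \<tau>) < (1 - d) * p * t - c * \<tau>"
proof -
  have "0 < c * (t - \<tau>)" using assms by simp
  with sp \<open>0 \<le> w\<close> have "0 < (1 - d) * p * t - c * \<tau>"
    by (smt (verit) mult_nonneg_nonpos)
  with \<open>w < 1\<close> have "w * ((1 - d) * p * t - c * \<tau>) < (1 - d) * p * t - c * \<tau>" by simp
  with sp show ?thesis by linarith
qed

lemma outage_bound_of_sp_condition:
  fixes c t \<tau> w d p :: real
  assumes sp: "c * (t - \<tau>) \<le> w * ((1 - d) * p * t - c * \<tau>)"
    and "0 < c" "0 < p" "\<tau> < t" "0 < t" "0 \<le> w" "w < 1"
  shows "d < 1 - c / p"
proof -
  have "c * t < (1 - d) * p * t"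
    using sp_condition_imp_margin[OF sp] assms by (simp add: algebra_simps)
  then have "c < (1 - d) * p" using \<open>0 < t\<close> by simp
  with \<open>0 < p\<close> show ?thesis by (simp add: field_simps)
qed

lemma willingness_bound_of_sp_condition:
  fixes c t \<tau> w d p :: real
  assumes sp: "c * (t - \<tau>) \<le> w * ((1 - d) * p * t - c * \<tau>)"
    and "0 < c" "c < p" "0 < \<tau>" "\<tau> < t" "0 < d" "0 \<le> w" "w < 1"
  shows "(1 - \<tau> / t) / (p / c - \<tau> / t) < w"
proof -
  define gain where "gain = (1 - d) * p * t - c * \<tau>"
  have "0 < t" "c * \<tau> < p * t"
    using assms by (auto intro: mult_strict_mono)
  have "0 < c * (t - \<tau>)" using assms by simp
  moreover have "c * (t - \<tau>) < gain"
    using sp_condition_imp_margin[OF sp] assms unfolding gain_def by simp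
  ultimately have "0 < gain" by linarith
  have "(1 - \<tau> / t) / (p / c - \<tau> / t) = c * (t - \<tau>) / (p * t - c * \<tau>)"
    using \<open>0 < t\<close> \<open>c * \<tau> < p * t\<close> \<open>0 < c\<close> by (simp add: field_simps)
  also have "\<dots> < c * (t - \<tau>) / gain"
  proof (rule divide_strict_left_mono)
    show "gain < p * t - c * \<tau>"
      using assms \<open>0 < t\<close> unfolding gain_def by simp
    show "0 < (p * t - c * \<tau>) * gain"
      using \<open>c * \<tau> < p * t\<close> \<open>0 < gain\<close> by simp
  qed fact
  also have "\<dots> \<le> w"
    using sp \<open>0 < gain\<close> unfolding gain_def by (simp add: pos_divide_le_eq mult.commute)
  finally show ?thesis .
qed

lemma price_below_utility_of_client_condition:
  fixes p t g \<tau> w :: real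
  assumes cl: "p * t \<le> g * (t - \<tau> + w * \<tau>)"
    and "0 < g" "0 < \<tau>" "0 < t" "w < 1"
  shows "p < g"
proof -
  have "g * (t - \<tau> + w * \<tau>) < g * t" using assms by simp
  with cl have "p * t < g * t" by linarith
  with \<open>0 < t\<close> show ?thesis by simp
qed

lemma willingness_bound_of_client_condition:
  fixes p t g g0 \<tau> w :: real
  assumes cl: "p * t \<le> g * (t - \<tau> + w * \<tau>)"
    and "0 < g" "g < g0" "0 < p" "0 < \<tau>" "0 < t"
  shows "1 - (1 - p / g0) / (\<tau> / t) < w"
proof -
  have "p / g0 < p / g" using assms by (intro divide_strict_left_mono) auto
  then have "1 - (1 - p / g0) / (\<tau> / t) < 1 - (1 - p / g) / (\<tau> / t)"
    using assms by (simp add: divide_strict_right_mono)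
  also have "\<dots> = (p * t - g * (t - \<tau>)) / (g * \<tau>)"
    using assms by (simp add: field_simps)
  also have "\<dots> \<le> w"
    using cl assms by (simp add: pos_divide_le_eq algebra_simps)
  finally show ?thesis .
qed

lemma less_gen_inv:
  assumes "continuous_on {0..1} \<Gamma>" and "0 \<le> x" "x < 1" and "y < \<Gamma> x"
  shows "x < gen_inv \<Gamma> y"
proof -
  obtain e where "e > 0"
    and near: "\<And>z. z \<in> {0..1} \<Longrightarrow> dist z x < e \<Longrightarrow> dist (\<Gamma> z) (\<Gamma> x) < \<Gamma> x - y"
    using assms unfolding continuous_on_iff by (metis atLeastAtMost_iff diff_gt_0_iff_gt less_eq_real_def)
  define z where "z = min (x + e / 2) 1"
  have z: "z \<in> {0..1}" "x < z" "dist z x < e"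
    using assms \<open>e > 0\<close> unfolding z_def dist_real_def by auto
  then have "y \<le> \<Gamma> z" using near[of z] unfolding dist_real_def by linarith
  moreover have "bdd_above {z \<in> {0..1}. y \<le> \<Gamma> z}" by (rule bdd_aboveI[of _ 1]) auto
  ultimately have "z \<le> gen_inv \<Gamma> y"
    unfolding gen_inv_def using z by (auto intro: cSup_upper)
  with \<open>x < z\<close> show ?thesis by simp
qed

theorem corollary3:
  fixes t \<tau> c p d w :: real and \<Gamma> :: "real \<Rightarrow> real"
  assumes "t > 0" and "0 < \<tau>" and "\<tau> < t" and "c > 0" and "p > c"
    and "0 < d" and "d < 1" and "0 < w" and "w < 1"
    and "strict_antimono_on {0..1} \<Gamma>"
    and "continuous_on {0..1} \<Gamma>"
    and "\<forall>x\<in>{0..1}. \<Gamma> x > 0"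
    and "\<Gamma> 0 > p"
    and "cooperation_conditions t \<tau> c p d w \<Gamma>"
  shows "d < min (1 - c / p) (gen_inv \<Gamma> p) \<and>
         w > max ((1 - \<tau> / t) / (p / c - \<tau> / t)) (1 - (1 - p / \<Gamma> 0) / (\<tau> / t))"
proof -
  have ranges: "0 \<le> d" "d < 1" "0 \<le> w" "w < 1" using assms by auto
  have sp: "c * (t - \<tau>) \<le> w * ((1 - d) * p * t - c * \<tau>)"
    and cl: "p * t \<le> \<Gamma> d * (t - \<tau> + w * \<tau>)"
    using assms(14) Pi_s_J_2_le_Pi_s_C_iff[OF ranges] Pi_c_J_2_le_Pi_c_C_iff[OF ranges]
    unfolding cooperation_conditions_def by auto
  have "0 < \<Gamma> d" using assms by simp
  have "\<Gamma> d < \<Gamma> 0" using assms(6,7,10) unfolding monotone_on_def by auto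
  have "d < 1 - c / p"
    using outage_bound_of_sp_condition[OF sp] assms by simp
  moreover have "d < gen_inv \<Gamma> p"
    using less_gen_inv price_below_utility_of_client_condition[OF cl \<open>0 < \<Gamma> d\<close>] assms by simp
  moreover have "(1 - \<tau> / t) / (p / c - \<tau> / t) < w"
    using willingness_bound_of_sp_condition[OF sp] assms by simp
  moreover have "1 - (1 - p / \<Gamma> 0) / (\<tau> / t) < w"
    using willingness_bound_of_client_condition[OF cl \<open>0 < \<Gamma> d\<close> \<open>\<Gamma> d < \<Gamma> 0\<close>] assms by simp
  ultimately show ?thesis by simp
qed

end
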